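(* Let $K$ be an oriented Legendrian knot and $(X,\ast,u,d)$ a finite GL-rack. Let $\Delta=\alpha_1\cdots\alpha_n$ be the disjoint cycle decomposition of its diagonal map (fixed points counted as $1$-cycles), $A_i=\operatorname{supp}(\alpha_i)$, and let $B_1,\dots,B_m$ be the sets obtained by taking, for each cycle length occurring, the union of all $A_i$ of that length, so that $X=\bigsqcup_j B_j$ and each $(B_j,\ast|_{B_j},u|_{B_j},d|_{B_j})$ is a GL-rack. Then $\operatorname{Col}_X(K)=\sum_{j=1}^m\operatorname{Col}_{B_j}(K)$.
   Context: A rack is a set $X$ with a binary operation $\ast$ such that for every $y\in X$ the map $x\mapsto x\ast y$ is a bijection of $X$ (inverse written $x\mapsto x\ast^{-1}y$) and $(x\ast y)\ast z=(x\ast z)\ast(y\ast z)$ for all $x,y,z$. A GL-rack is a quadruple $(X,\ast,u,d)$ where $(X,\ast)$ is a rack and $u,d\colon X\to X$ are maps such that for all $x,y\in X$: $u(d(x\ast x))=d(u(x\ast x))=x$; $u(x\ast y)=u(x)\ast y$ and $d(x\ast y)=d(x)\ast y$; $x\ast u(y)=x\ast d(y)=x\ast y$. Homomorphisms of GL-racks preserve $\ast,u,d$. The diagonal map is $\Delta(x)=x\ast x$; for a finite GL-rack it is a bijection and $\Delta=(u\circ d)^{-1}$. Legendrian knots lie in $(\mathbb{R}^3,\xi_{\mathrm{std}})$, $\xi_{\mathrm{std}}=\mathrm{span}\{\partial_y,\partial_x+y\partial_z\}$, and are represented by oriented front diagrams (projections to the $(x,z)$-plane) with crossings and cusps. Given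 a finite GL-rack $Y$ and a front diagram $D$ of $K$, a coloring is an assignment of elements of $Y$ to the semi-arcs of $D$ (segments bounded by undercrossings or cusps) such that, following the orientation through a cusp, the color changes from $x$ to $u(x)$ if the cusp is traversed upward and to $d(x)$ if traversed downward; and at each crossing whose over-strand is colored $y$, if the under semi-arc on the right of the oriented over-strand is colored $x$, the one on its left is colored $x\ast y$. The number $\operatorname{Col}_Y(K)$ of colorings is a Legendrian isotopy invariant, equal to $|\operatorname{Hom}(\operatorname{GLR}(K),Y)|$ where $\operatorname{GLR}(K)$ is the fundamental GL-rack of $K$ (generated by the arcs of $D$ subject to these relations). *)

theory Defs
  imports Main "HOL-Library.FuncSet"
begin

definition rack_on :: "'a set \<Rightarrow> ('a \<Rightarrow> 'a \<Rightarrow> 'a) \<Rightarrow> bool" where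
  "rack_on X op \<longleftrightarrow>
     (\<forall>x\<in>X. \<forall>y\<in>X. op x y \<in> X) \<and>
     (\<forall>y\<in>X. bij_betw (\<lambda>x. op x y) X X) \<and>
     (\<forall>x\<in>X. \<forall>y\<in>X. \<forall>z\<in>X. op (op x y) z = op (op x z) (op y z))"

definition gl_rack :: "'a set \<Rightarrow> ('a \<Rightarrow> 'a \<Rightarrow> 'a) \<Rightarrow> ('a \<Rightarrow> 'a) \<Rightarrow> ('a \<Rightarrow> 'a) \<Rightarrow> bool" where
  "gl_rack X op u d \<longleftrightarrow>
     rack_on X op \<and> u ` X \<subseteq> X \<and> d ` X \<subseteq> X \<and>
     (\<forall>x\<in>X. u (d (op x x)) = x \<and> d (u (op x x)) = x) \<and>
     (\<forall>x\<in>X. \<forall>y\<in>X. u (op x y) = op (u x) y \<and> d (op x y) = op (d x) y) \<and>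
     (\<forall>x\<in>X. \<forall>y\<in>X. op x (u y) = op x y \<and> op x (d y) = op x y)"

definition diag :: "('a \<Rightarrow> 'a \<Rightarrow> 'a) \<Rightarrow> 'a \<Rightarrow> 'a" where
  "diag op x = op x x"

definition cyc_len :: "('a \<Rightarrow> 'a \<Rightarrow> 'a) \<Rightarrow> 'a \<Rightarrow> nat" where
  "cyc_len op x = (LEAST n. n > 0 \<and> (diag op ^^ n) x = x)"

text \<open>The block B_k: union of the supports of all cycles of the diagonal map of length k.\<close>

definition cycle_block :: "'a set \<Rightarrow> ('a \<Rightarrow> 'a \<Rightarrow> 'a) \<Rightarrow> nat \<Rightarrow> 'a set" where
  "cycle_block X op k = {x \<in> X. cyc_len op x = k}"

text \<open>Semi-arcs are numbered 0..N-1 in the order met when travelling along the oriented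
knot. The transition from semi-arc i to semi-arc (i+1) mod N is an upward cusp, a downward
cusp, or passing under a crossing whose over-strand lies on semi-arc o. The boolean says
whether we pass from the right side (True) or from the left side (False) of the oriented
over-strand.\<close>

datatype transition = CuspUp | CuspDown | Under nat bool

datatype front = Front nat "nat \<Rightarrow> transition"

fun knot_diagram :: "front \<Rightarrow> bool" where
  "knot_diagram (Front N T) \<longleftrightarrow>
     N > 0 \<and> (\<forall>i<N. \<forall>ov s. T i = Under ov s \<longrightarrow> ov < N)"

fun coloring_rel :: "('a \<Rightarrow> 'a \<Rightarrow> 'a) \<Rightarrow> ('a \<Rightarrow> 'a) \<Rightarrow> ('a \<Rightarrow> 'a) \<Rightarrow> transition
    \<Rightarrow> 'a \<Rightarrow> 'a \<Rightarrow> (nat \<Rightarrow> 'a) \<Rightarrow> bool" where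
  "coloring_rel op u d CuspUp a b c \<longleftrightarrow> b = u a"
| "coloring_rel op u d CuspDown a b c \<longleftrightarrow> b = d a"
| "coloring_rel op u d (Under ov True) a b c \<longleftrightarrow> b = op a (c ov)"
| "coloring_rel op u d (Under ov False) a b c \<longleftrightarrow> a = op b (c ov)"

fun colorings :: "'a set \<Rightarrow> ('a \<Rightarrow> 'a \<Rightarrow> 'a) \<Rightarrow> ('a \<Rightarrow> 'a) \<Rightarrow> ('a \<Rightarrow> 'a) \<Rightarrow> front
    \<Rightarrow> (nat \<Rightarrow> 'a) set" where
  "colorings Y op u d (Front N T) =
     {c \<in> {0..<N} \<rightarrow>\<^sub>E Y. \<forall>i<N. coloring_rel op u d (T i) (c i) (c (Suc i mod N)) c}"

definition Col :: "'a set \<Rightarrow> ('a \<Rightarrow> 'a \<Rightarrow> 'a) \<Rightarrow> ('a \<Rightarrow> 'a) \<Rightarrow> ('a \<Rightarrow> 'a) \<Rightarrow> front \<Rightarrow> nat" where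
  "Col Y op u d D = card (colorings Y op u d D)"

end

theory Submission
  imports Defs
begin

text \<open>The diagonal map commutes with the right translations, with u and with d, and on a
finite GL-rack all of these maps are injective, so they preserve the length of the cycle of the
diagonal map through an element. Hence every block is closed under the operations, and along
each cusp and crossing of a diagram the colour keeps its cycle length. A knot has one component,
so every colouring takes all its values in a single block.\<close>

lemma funpow_fixed_iff_commute_inj:
  assumes inj: "inj_on h A" and closed: "f ` A \<subseteq> A" and x: "x \<in> A"
    and comm: "\<And>y. y \<in> A \<Longrightarrow> f (h y) = h (f y)"
  shows "(f ^^ n) (h x) = h x \<longleftrightarrow> (f ^^ n) x = x"
proof -
  have orbit: "(f ^^ m) x \<in> A" for m
    using closed x by (induction m) auto
  have "(f ^^ n) (h x) = h ((f ^^ n) x)"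
    by (induction n) (use comm orbit in auto)
  then show ?thesis
    using inj_onD[OF inj _ orbit x] by auto
qed

lemma cyc_len_commute_inj:
  assumes "inj_on h X" and "diag op ` X \<subseteq> X" and "x \<in> X"
    and "\<And>y. y \<in> X \<Longrightarrow> diag op (h y) = h (diag op y)"
  shows "cyc_len op (h x) = cyc_len op x"
  unfolding cyc_len_def by (simp only: funpow_fixed_iff_commute_inj[OF assms])

lemma inj_on_if_left_inverse_after_surj:
  assumes surj: "f ` A = A" and inverse: "\<And>x. x \<in> A \<Longrightarrow> g (h (f x)) = x"
  shows "inj_on h A"
proof (rule inj_onI)
  fix a b assume "a \<in> A" "b \<in> A" "h a = h b"
  then obtain a' b' where "a' \<in> A" "b' \<in> A" "a = f a'" "b = f b'"
    using surj by (metis imageE)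
  moreover from this \<open>h a = h b\<close> have "g (h (f a')) = g (h (f b'))"
    by simp
  ultimately show "a = b"
    using inverse by metis
qed

context
  fixes X :: "'a set" and op :: "'a \<Rightarrow> 'a \<Rightarrow> 'a" and u d :: "'a \<Rightarrow> 'a"
  assumes gl: "gl_rack X op u d"
begin

lemma gl_rack_op_closed: "x \<in> X \<Longrightarrow> y \<in> X \<Longrightarrow> op x y \<in> X"
  using gl unfolding gl_rack_def rack_on_def by (elim conjE) simp

lemma gl_rack_inj_on_op_right: "y \<in> X \<Longrightarrow> inj_on (\<lambda>x. op x y) X"
  using gl unfolding gl_rack_def rack_on_def bij_betw_def by (elim conjE; blast)

lemma gl_rack_self_distrib:
  "x \<in> X \<Longrightarrow> y \<in> X \<Longrightarrow> z \<in> X \<Longrightarrow> op (op x y) z = op (op x z) (op y z)"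
  using gl unfolding gl_rack_def rack_on_def by (elim conjE; blast)

lemma gl_rack_u_closed: "x \<in> X \<Longrightarrow> u x \<in> X"
  and gl_rack_d_closed: "x \<in> X \<Longrightarrow> d x \<in> X"
  using gl unfolding gl_rack_def by (elim conjE; blast)+

lemma gl_rack_u_d_diag: "x \<in> X \<Longrightarrow> u (d (diag op x)) = x"
  and gl_rack_d_u_diag: "x \<in> X \<Longrightarrow> d (u (diag op x)) = x"
  using gl unfolding gl_rack_def diag_def by (elim conjE; blast)+

lemma gl_rack_u_op: "x \<in> X \<Longrightarrow> y \<in> X \<Longrightarrow> u (op x y) = op (u x) y"
  and gl_rack_d_op: "x \<in> X \<Longrightarrow> y \<in> X \<Longrightarrow> d (op x y) = op (d x) y"
  and gl_rack_op_u: "x \<in> X \<Longrightarrow> y \<in> X \<Longrightarrow> op x (u y) = op x y"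
  and gl_rack_op_d: "x \<in> X \<Longrightarrow> y \<in> X \<Longrightarrow> op x (d y) = op x y"
  using gl unfolding gl_rack_def by (elim conjE; blast)+

lemma diag_closed: "diag op ` X \<subseteq> X"
  using gl_rack_op_closed unfolding diag_def by blast

lemma diag_op_right: "x \<in> X \<Longrightarrow> y \<in> X \<Longrightarrow> diag op (op x y) = op (diag op x) y"
  unfolding diag_def by (rule gl_rack_self_distrib[symmetric])

lemma diag_u: "x \<in> X \<Longrightarrow> diag op (u x) = u (diag op x)"
  and diag_d: "x \<in> X \<Longrightarrow> diag op (d x) = d (diag op x)"
  using gl_rack_u_closed gl_rack_d_closed gl_rack_u_op gl_rack_d_op gl_rack_op_u gl_rack_op_d
  unfolding diag_def by simp_all

lemma gl_rack_subset:
  assumes "finite B" and "B \<subseteq> X"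
    and op_closed: "\<And>x y. x \<in> B \<Longrightarrow> y \<in> B \<Longrightarrow> op x y \<in> B"
    and "u ` B \<subseteq> B" and "d ` B \<subseteq> B"
  shows "gl_rack B op u d"
proof -
  have "bij_betw (\<lambda>x. op x y) B B" if y: "y \<in> B" for y
  proof -
    have "inj_on (\<lambda>x. op x y) B"
      using gl_rack_inj_on_op_right y \<open>B \<subseteq> X\<close> by (meson inj_on_subset subsetD)
    moreover have "(\<lambda>x. op x y) ` B \<subseteq> B"
      using op_closed y by blast
    ultimately show ?thesis
      using endo_inj_surj[OF \<open>finite B\<close>] by (simp add: bij_betw_def)
  qed
  moreover have "x \<in> X" if "x \<in> B" for x
    using that \<open>B \<subseteq> X\<close> by blast
  ultimately show ?thesis
    unfolding gl_rack_def rack_on_def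
    using op_closed \<open>u ` B \<subseteq> B\<close> \<open>d ` B \<subseteq> B\<close> gl_rack_self_distrib
      gl_rack_u_d_diag[unfolded diag_def] gl_rack_d_u_diag[unfolded diag_def]
      gl_rack_u_op gl_rack_d_op gl_rack_op_u gl_rack_op_d
    by (intro conjI ballI) (meson | assumption)+
qed

lemma cyc_len_op_right:
  assumes "x \<in> X" and "y \<in> X"
  shows "cyc_len op (op x y) = cyc_len op x"
  using cyc_len_commute_inj[where h = "\<lambda>x. op x y", OF gl_rack_inj_on_op_right diag_closed]
    diag_op_right gl_rack_op_closed assms by simp

context
  assumes fin: "finite X"
begin

lemma diag_image: "diag op ` X = X"
proof (rule endo_inj_surj[OF fin diag_closed])
  show "inj_on (diag op) X"
    by (rule inj_on_inverseI[where g = "u \<circ> d"]) (simp add: gl_rack_u_d_diag)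
qed

lemma inj_on_u: "inj_on u X"
  using inj_on_if_left_inverse_after_surj[OF diag_image] gl_rack_d_u_diag by blast

lemma inj_on_d: "inj_on d X"
  using inj_on_if_left_inverse_after_surj[OF diag_image] gl_rack_u_d_diag by blast

lemma cyc_len_u: "x \<in> X \<Longrightarrow> cyc_len op (u x) = cyc_len op x"
  using cyc_len_commute_inj[OF inj_on_u diag_closed] diag_u by simp

lemma cyc_len_d: "x \<in> X \<Longrightarrow> cyc_len op (d x) = cyc_len op x"
  using cyc_len_commute_inj[OF inj_on_d diag_closed] diag_d by simp

lemma gl_rack_cycle_block: "gl_rack (cycle_block X op k) op u d"
proof (rule gl_rack_subset)
  show "finite (cycle_block X op k)" and "cycle_block X op k \<subseteq> X"
    using fin unfolding cycle_block_def by auto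
  show "op x y \<in> cycle_block X op k" if "x \<in> cycle_block X op k" "y \<in> cycle_block X op k" for x y
    using that gl_rack_op_closed cyc_len_op_right unfolding cycle_block_def by auto
  show "u ` cycle_block X op k \<subseteq> cycle_block X op k" and "d ` cycle_block X op k \<subseteq> cycle_block X op k"
    using gl_rack_u_closed gl_rack_d_closed cyc_len_u cyc_len_d unfolding cycle_block_def by auto
qed

lemma cyc_len_coloring_rel:
  assumes "coloring_rel op u d t a b c" and "a \<in> X" and "b \<in> X"
    and "\<And>ov s. t = Under ov s \<Longrightarrow> c ov \<in> X"
  shows "cyc_len op b = cyc_len op a"
proof (cases t)
  case (Under ov s)
  then show ?thesis
    using assms cyc_len_op_right by (cases s) auto
qed (use assms cyc_len_u cyc_len_d in auto)

end

end

lemma eq_0_if_eq_Suc: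
  assumes "\<And>i. Suc i < N \<Longrightarrow> g (Suc i) = g i" and "i < N"
  shows "g i = g 0"
  using assms by (induction i) auto

lemma coloring_cyc_len_const:
  assumes fin: "finite X" and gl: "gl_rack X op u d" and D: "knot_diagram (Front N T)"
    and c: "c \<in> colorings X op u d (Front N T)" and "i < N"
  shows "cyc_len op (c i) = cyc_len op (c 0)"
proof (rule eq_0_if_eq_Suc[of N, OF _ \<open>i < N\<close>])
  fix j assume j: "Suc j < N"
  have "\<forall>i<N. coloring_rel op u d (T i) (c i) (c (Suc i mod N)) c"
    using c by simp
  then have rel: "coloring_rel op u d (T j) (c j) (c (Suc j)) c"
    using j by (metis Suc_lessD mod_less)
  have colours: "c i \<in> X" if "i < N" for i
    using c that by (auto simp: PiE_iff)
  have "ov < N" if "T j = Under ov s" for ov s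
    using D j that by (metis Suc_lessD knot_diagram.simps)
  then show "cyc_len op (c (Suc j)) = cyc_len op (c j)"
    using cyc_len_coloring_rel[OF gl fin rel] colours j by (meson Suc_lessD)
qed

lemma colorings_cycle_block_iff:
  "c \<in> colorings (cycle_block X op k) op u d (Front N T) \<longleftrightarrow>
   c \<in> colorings X op u d (Front N T) \<and> (\<forall>i<N. cyc_len op (c i) = k)"
  unfolding colorings.simps cycle_block_def PiE_iff by auto

lemma colorings_cycle_block:
  assumes "finite X" and "gl_rack X op u d" and "knot_diagram (Front N T)"
  shows "colorings (cycle_block X op k) op u d (Front N T)
       = {c \<in> colorings X op u d (Front N T). cyc_len op (c 0) = k}"
proof -
  have "0 < N"
    using assms(3) by simp
  then show ?thesis
    using coloring_cyc_len_const[OF assms] colorings_cycle_block_iff by blast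
qed

lemma finite_colorings: "finite Y \<Longrightarrow> finite (colorings Y op u d (Front N T))"
  by (rule finite_subset[of _ "{0..<N} \<rightarrow>\<^sub>E Y"]) (auto simp: finite_PiE)

theorem theorem3p10:
  fixes X :: "'a set" and op :: "'a \<Rightarrow> 'a \<Rightarrow> 'a" and u d :: "'a \<Rightarrow> 'a" and D :: front
  assumes "finite X" and "gl_rack X op u d" and "knot_diagram D"
  shows "(\<forall>k \<in> cyc_len op ` X. gl_rack (cycle_block X op k) op u d)
       \<and> X = (\<Union>k \<in> cyc_len op ` X. cycle_block X op k)
       \<and> Col X op u d D = (\<Sum>k \<in> cyc_len op ` X. Col (cycle_block X op k) op u d D)"
proof (intro conjI)
  show "\<forall>k \<in> cyc_len op ` X. gl_rack (cycle_block X op k) op u d"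
    using gl_rack_cycle_block[OF assms(2,1)] by blast
  show "X = (\<Union>k \<in> cyc_len op ` X. cycle_block X op k)"
    unfolding cycle_block_def by blast
  obtain N T where D: "D = Front N T" by (cases D)
  let ?C = "colorings X op u d D"
  have "finite ?C"
    using finite_colorings assms(1) D by simp
  moreover have "(\<lambda>c. cyc_len op (c 0)) ` ?C \<subseteq> cyc_len op ` X"
    using assms(3) by (auto simp: D)
  ultimately have "Col X op u d D = (\<Sum>k \<in> cyc_len op ` X. card {c \<in> ?C. cyc_len op (c 0) = k})"
    unfolding Col_def card_eq_sum using assms(1) by (intro sum.group[symmetric]) auto
  also have "\<dots> = (\<Sum>k \<in> cyc_len op ` X. Col (cycle_block X op k) op u d D)"
    using colorings_cycle_block[OF assms(1,2)] assms(3) by (simp add: Col_def D)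
  finally show "Col X op u d D = (\<Sum>k \<in> cyc_len op ` X. Col (cycle_block X op k) op u d D)" .
qed

end
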